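(* For every integer $r\ge7$ there exists $x\in(0,1)$ with $g_r(x)>x$, where $g_r(x)=\mathbb E_{Z\sim\mathcal N(0,1)}\tanh\big(s_r(x)+\sqrt{s_r(x)}Z\big)$ and $s_r(x)=\frac{1}{2(r-1)}\big((1+x)^{r-1}-(1-x)^{r-1}\big)$. *)

theory Defs
  imports "HOL-Probability.Probability"
begin

definition s_fun :: "nat \<Rightarrow> real \<Rightarrow> real" where
  "s_fun r x = ((1 + x) ^ (r - 1) - (1 - x) ^ (r - 1)) / (2 * (real r - 1))"

definition g_fun :: "nat \<Rightarrow> real \<Rightarrow> real" where
  "g_fun r x = (\<integral>z. std_normal_density z * tanh (s_fun r x + sqrt (s_fun r x) * z) \<partial>lborel)"

end

theory Submission
  imports Defs "HOL-Real_Asymp.Real_Asymp"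
begin

(* Write s = s_r(x) and phi for the standard normal density. Since 1 - tanh y = exp (-y) / cosh y
   and, by completing the square, phi z * exp (-(s + sqrt s * z)) = exp (-s/2) * phi (z + sqrt s)
   <= exp (-s/2) / sqrt (2 pi), we get
     g_r(x) >= 1 - exp (-s/2) / sqrt (2 pi) * integral dz / cosh (s + sqrt s * z)
             = 1 - sqrt (pi / (2 s)) * exp (-s/2).
   At x = 4/5 and r >= 7 one has s >= 2.83, where the error term is below 1/5, so g_r(4/5) > 4/5. *)

lemma one_minus_tanh_real: "1 - tanh (y::real) = exp (- y) / cosh y"
  unfolding tanh_def by (simp add: field_simps cosh_minus_sinh)

lemma inverse_cosh_real: "1 / cosh (y::real) = 2 * exp y / (1 + exp y ^ 2)"
  unfolding cosh_def by (simp add: field_simps exp_minus power2_eq_square)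

lemma std_normal_density_mult_exp:
  "std_normal_density z * exp (- (a * z)) = exp (a\<^sup>2 / 2) * std_normal_density (z + a)"
proof -
  have "- z\<^sup>2 / 2 + - (a * z) = a\<^sup>2 / 2 + - (z + a)\<^sup>2 / 2"
    by (simp add: power2_eq_square field_simps)
  then show ?thesis
    unfolding std_normal_density_def by (simp add: mult_exp_exp)
qed

lemma std_normal_density_le: "std_normal_density z \<le> 1 / sqrt (2 * pi)"
  unfolding std_normal_density_def by (simp add: divide_right_mono)

lemma
  fixes a b :: real
  assumes "a > 0"
  shows integrable_inverse_cosh_affine: "integrable lborel (\<lambda>z. 1 / cosh (b + a * z))"
    and integral_inverse_cosh_affine: "(\<integral>z. 1 / cosh (b + a * z) \<partial>lborel) = pi / a"
proof -
  \<comment> \<open>\<open>2 * arctan (exp y)\<close> is an antiderivative of \<open>1 / cosh y\<close> (the Gudermannian, shifted)\<close>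
  define F where "F z = 2 / a * arctan (exp (b + a * z))" for z
  have deriv: "(F has_real_derivative 1 / cosh (b + a * x)) (at x)" for x
  proof -
    have "(F has_real_derivative 2 / a * (inverse (1 + (exp (b + a * x))\<^sup>2) * (exp (b + a * x) * a))) (at x)"
      unfolding F_def by (auto intro!: derivative_eq_intros)
    then show ?thesis
      using assms by (simp add: inverse_cosh_real field_simps)
  qed
  have cont: "isCont (\<lambda>z. 1 / cosh (b + a * z)) x" for x
    by (intro continuous_intros) simp_all
  have lim_bot: "((F \<circ> real_of_ereal) \<longlongrightarrow> 0) (at_right (-\<infinity>))"
    unfolding F_def ereal_tendsto_simps1 using assms by real_asymp
  have lim_top: "((F \<circ> real_of_ereal) \<longlongrightarrow> pi / a) (at_left \<infinity>)"
    unfolding F_def ereal_tendsto_simps1 using assms by real_asymp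
  note FTC = interval_integral_FTC_nonneg[of "-\<infinity>" "\<infinity>", OF _ deriv cont _ lim_bot lim_top]
  have "set_integrable lborel (einterval (-\<infinity>) \<infinity>) (\<lambda>z. 1 / cosh (b + a * z))"
    "(LBINT z=-\<infinity>..\<infinity>. 1 / cosh (b + a * z)) = pi / a"
    using FTC by simp_all
  then show "integrable lborel (\<lambda>z. 1 / cosh (b + a * z))"
    and "(\<integral>z. 1 / cosh (b + a * z) \<partial>lborel) = pi / a"
    by (simp_all add: set_integrable_def interval_lebesgue_integral_def set_lebesgue_integral_def)
qed

lemma integrable_std_normal_density_mult_tanh:
  "integrable lborel (\<lambda>z. std_normal_density z * tanh (b + a * z))"
proof (rule Bochner_Integration.integrable_bound)
  show "integrable lborel std_normal_density"
    by simp
  show "(\<lambda>z. std_normal_density z * tanh (b + a * z)) \<in> borel_measurable lborel"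
    unfolding measurable_lborel2 std_normal_density_def
    by (intro borel_measurable_continuous_onI continuous_intros) simp_all
  have "\<bar>tanh (b + a * z)\<bar> \<le> 1" for z
    using tanh_real_bounds[of "b + a * z"] by auto
  then show "AE z in lborel. norm (std_normal_density z * tanh (b + a * z)) \<le> norm (std_normal_density z)"
    by (auto simp: abs_mult intro!: mult_left_le)
qed

lemma std_normal_tanh_integral_ge:
  fixes s :: real
  assumes "s > 0"
  shows "(\<integral>z. std_normal_density z * tanh (s + sqrt s * z) \<partial>lborel)
           \<ge> 1 - sqrt (pi / (2 * s)) * exp (- s / 2)"
proof -
  define C where "C = exp (- s / 2) * (1 / sqrt (2 * pi))"
  have pointwise: "std_normal_density z * (1 - tanh (s + sqrt s * z))
      \<le> C * (1 / cosh (s + sqrt s * z))" for z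
  proof -
    have "std_normal_density z * (1 - tanh (s + sqrt s * z))
        = exp (- s) * (std_normal_density z * exp (- (sqrt s * z))) / cosh (s + sqrt s * z)"
      by (simp add: one_minus_tanh_real exp_add[symmetric])
    also have "\<dots> = exp (- s) * exp ((sqrt s)\<^sup>2 / 2) * std_normal_density (z + sqrt s)
                      / cosh (s + sqrt s * z)"
      by (simp add: std_normal_density_mult_exp)
    also have "\<dots> = exp (- s / 2) * std_normal_density (z + sqrt s) / cosh (s + sqrt s * z)"
      using assms by (simp add: mult_exp_exp)
    also have "\<dots> \<le> C / cosh (s + sqrt s * z)"
      unfolding C_def by (intro divide_right_mono mult_left_mono std_normal_density_le) auto
    finally show ?thesis by simp
  qed
  have "(\<integral>z. std_normal_density z * (1 - tanh (s + sqrt s * z)) \<partial>lborel)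
      \<le> (\<integral>z. C * (1 / cosh (s + sqrt s * z)) \<partial>lborel)"
  proof (rule integral_mono[OF _ _ pointwise])
    show "integrable lborel (\<lambda>z. std_normal_density z * (1 - tanh (s + sqrt s * z)))"
      using integrable_std_normal_density_mult_tanh by (simp add: right_diff_distrib)
    show "integrable lborel (\<lambda>z. C * (1 / cosh (s + sqrt s * z)))"
      using assms by (intro integrable_mult_right integrable_inverse_cosh_affine) simp
  qed
  also have "\<dots> = C * (pi / sqrt s)"
    using assms by (simp only: integral_mult_right_zero integral_inverse_cosh_affine real_sqrt_gt_zero)
  also have "\<dots> = sqrt (pi / (2 * s)) * exp (- s / 2)"
    using assms unfolding C_def by (simp add: real_sqrt_divide real_sqrt_mult field_simps)
  finally show ?thesis
    using integrable_std_normal_density_mult_tanh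
    by (simp add: right_diff_distrib)
qed

lemma sqrt_pi_div_mult_exp_lt:
  fixes s :: real
  assumes "s \<ge> 283 / 100"
  shows "sqrt (pi / (2 * s)) * exp (- s / 2) < 1 / 5"
proof -
  have "pi / (2 * s) < (3 / 4)\<^sup>2"
    using pi_approx assms by (simp add: field_simps power2_eq_square)
  then have sqrt_lt: "sqrt (pi / (2 * s)) < 3 / 4"
    by (rule real_less_lsqrt[rotated]) simp
  have "15 / 4 \<le> (1 + (7 / 5) / real 14 :: real) ^ 14"
    by (simp add: power_divide)
  also have "\<dots> \<le> exp (7 / 5)"
    by (rule exp_ge_one_plus_x_over_n_power_n) simp_all
  also have "\<dots> \<le> exp (s / 2)"
    using assms by simp
  finally have "exp (- s / 2) \<le> 4 / 15"
    by (simp add: exp_minus field_simps)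
  then have "sqrt (pi / (2 * s)) * exp (- s / 2) \<le> sqrt (pi / (2 * s)) * (4 / 15)"
    using assms by (intro mult_left_mono) simp_all
  also have "\<dots> < 3 / 4 * (4 / 15)"
    using sqrt_lt by simp
  finally show ?thesis by simp
qed

lemma nine_fifths_pow_minus_one_fifth_pow_ge:
  fixes n :: nat
  assumes "n \<ge> 6"
  shows "(9 / 5 :: real) ^ n - (1 / 5) ^ n \<ge> 283 / 50 * n"
  using assms
proof (induction n rule: dec_induct)
  case base
  show ?case by (simp add: power_divide)
next
  case (step n)
  have "(9 / 5 :: real) ^ Suc n - (1 / 5) ^ Suc n \<ge> 9 / 5 * ((9 / 5) ^ n - (1 / 5) ^ n)"
    by simp
  moreover have "9 / 5 * ((9 / 5) ^ n - (1 / 5) ^ n) \<ge> 9 / 5 * (283 / 50 * real n)"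
    using step.IH by simp
  moreover have "9 / 5 * (283 / 50 * real n) \<ge> 283 / 50 * real (Suc n)"
    using step.hyps by simp
  ultimately show ?case
    by linarith
qed

lemma s_fun_four_fifths_ge:
  assumes "r \<ge> 7"
  shows "s_fun r (4 / 5) \<ge> 283 / 100"
proof -
  have r_minus_1: "real r - 1 = real (r - 1)"
    using assms by auto
  have s_eq: "s_fun r (4 / 5) = ((9 / 5) ^ (r - 1) - (1 / 5) ^ (r - 1)) / (2 * real (r - 1))"
    unfolding s_fun_def r_minus_1 by simp
  have "283 / 50 * real (r - 1) \<le> (9 / 5) ^ (r - 1) - (1 / 5) ^ (r - 1)"
    using assms by (intro nine_fifths_pow_minus_one_fifth_pow_ge) simp
  moreover have "real (r - 1) > 0"
    using assms by simp
  ultimately show ?thesis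
    unfolding s_eq by (simp add: pos_le_divide_eq)
qed

theorem mainTheorem19:
  fixes r :: nat
  assumes "r \<ge> 7"
  shows "\<exists>x::real. 0 < x \<and> x < 1 \<and> g_fun r x > x"
proof (intro exI conjI)
  define s where "s = s_fun r (4 / 5)"
  have s_ge: "s \<ge> 283 / 100"
    unfolding s_def using assms by (rule s_fun_four_fifths_ge)
  have "g_fun r (4 / 5) \<ge> 1 - sqrt (pi / (2 * s)) * exp (- s / 2)"
    unfolding g_fun_def s_def[symmetric] using s_ge by (intro std_normal_tanh_integral_ge) simp
  with sqrt_pi_div_mult_exp_lt[OF s_ge] show "g_fun r (4 / 5) > 4 / 5"
    by linarith
qed simp_all

end
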